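(* Let the unperturbed dynamics (rates $W$) on the finite set $K$ be irreducible with unique stationary distribution $\rho$. For functions $V,M:K\to\mathbb{R}$, constants $a,b\in\mathbb{R}$ and small $h\in\mathbb{R}$, let $\rho^V=\rho^V_{h}$ be the unique stationary distribution of the dynamics with rates $W(x,y)e^{h(bV(y)-aV(x))}$, and let $\rho^M$ be the unique stationary distribution of the dynamics with rates $W(x,y)e^{h(aM(y)-bM(x))}$ (roles of $a$ and $b$ interchanged). Define \[ \chi^{ab}_{MV}=\frac{d}{dh}\Big|_{h=0}\sum_x\rho^V(x)\,LM(x),\qquad \chi^{ba}_{VM}=\frac{d}{dh}\Big|_{h=0}\sum_x\rho^M(x)\,LV(x). \] Then \[ \chi^{ab}_{MV}=\chi^{ba}_{VM}=b\,\langle M\,LV\rangle_\rho+a\,\langle V\,LM\rangle_\rho, \] where $\langle F\rangle_\rho=\sum_x\rho(x)F(x)$.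
   Context: $W(x,y)\ge0$ ($x\ne y\in K$) are transition rates on a finite set $K$ and $Lf(x)=\sum_yW(x,y)[f(y)-f(x)]$ is the backward generator of the unperturbed dynamics. *)

theory Defs
  imports "HOL-Analysis.Analysis"
begin

text \<open>Continuous-time Markov jump dynamics on a finite state type 'k with
transition rates R x y (x \<noteq> y). Diagonal entries play no role.\<close>

definition gen :: "('k::finite \<Rightarrow> 'k \<Rightarrow> real) \<Rightarrow> ('k \<Rightarrow> real) \<Rightarrow> 'k \<Rightarrow> real" where
  "gen R f x = (\<Sum>y\<in>UNIV. R x y * (f y - f x))"

definition irreducible :: "('k::finite \<Rightarrow> 'k \<Rightarrow> real) \<Rightarrow> bool" where
  "irreducible R \<longleftrightarrow> {(x, y). x \<noteq> y \<and> R x y > 0}\<^sup>* = UNIV"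

definition stationary_dist :: "('k::finite \<Rightarrow> 'k \<Rightarrow> real) \<Rightarrow> ('k \<Rightarrow> real) \<Rightarrow> bool" where
  "stationary_dist R p \<longleftrightarrow> (\<forall>x. p x \<ge> 0) \<and> (\<Sum>x\<in>UNIV. p x) = 1 \<and>
     (\<forall>y. (\<Sum>x\<in>UNIV - {y}. p x * R x y) = p y * (\<Sum>z\<in>UNIV - {y}. R y z))"

end

theory Submission
  imports Defs
begin

(* Let R_h x y = W x y * exp (h * c x y) and let P_h be its stationary law.  Since the
   P_h-average of the generator of R_h vanishes,
     (SUM x. P_h x * L M x) = (SUM x. P_h x * (SUM y. W x y * (1 - exp (h * c x y)) * (M y - M x))).
   The right-hand side is 0 at h = 0, and its difference quotient converges as soon as
   P_h --> rho, because (1 - exp (h * c)) / h --> - c.  So only continuity (not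
   differentiability) of the stationary law in the rates is needed. *)

section \<open>Net probability flux\<close>

definition net_flux :: "('k::finite \<Rightarrow> 'k \<Rightarrow> real) \<Rightarrow> ('k \<Rightarrow> real) \<Rightarrow> 'k \<Rightarrow> real" where
  "net_flux R v y = (\<Sum>x\<in>UNIV-{y}. v x * R x y) - v y * (\<Sum>z\<in>UNIV-{y}. R y z)"

lemma stationary_dist_iff:
  "stationary_dist R p \<longleftrightarrow> (\<forall>x. p x \<ge> 0) \<and> (\<Sum>x\<in>UNIV. p x) = 1 \<and> (\<forall>y. net_flux R p y = 0)"
  unfolding stationary_dist_def net_flux_def by simp

text \<open>The diagonal rates cancel, so the flux can be written with full sums.\<close>
lemma net_flux_full: "net_flux R v y = (\<Sum>x\<in>UNIV. v x * R x y) - v y * (\<Sum>z\<in>UNIV. R y z)"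
  unfolding net_flux_def by (simp add: sum_diff1 algebra_simps)

lemma net_flux_total: "(\<Sum>y\<in>UNIV. net_flux R v y) = 0"
proof -
  have "(\<Sum>y\<in>UNIV. \<Sum>x\<in>UNIV. v x * R x y) = (\<Sum>x\<in>UNIV. v x * (\<Sum>y\<in>UNIV. R x y))"
    by (subst sum.swap) (simp add: sum_distrib_left)
  then show ?thesis unfolding net_flux_full by (simp add: sum_subtractf)
qed

lemma net_flux_diff: "net_flux R (\<lambda>x. v x - w x) y = net_flux R v y - net_flux R w y"
  unfolding net_flux_def by (simp add: sum_subtractf algebra_simps)

lemma net_flux_scale: "net_flux R (\<lambda>x. c * v x) y = c * net_flux R v y"
  unfolding net_flux_def by (simp add: sum_distrib_left algebra_simps)

lemma net_flux_rates_diff: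
  "net_flux R v y - net_flux S v y = net_flux (\<lambda>x y. R x y - S x y) v y"
  unfolding net_flux_def by (simp add: sum_subtractf algebra_simps)

lemma balanced_gen_average:
  assumes "\<And>y. net_flux R p y = 0"
  shows "(\<Sum>x\<in>UNIV. p x * gen R f x) = 0"
proof -
  have inflow: "(\<Sum>x\<in>UNIV. p x * R x y) = p y * (\<Sum>z\<in>UNIV. R y z)" for y
    using assms[of y] unfolding net_flux_full by simp
  have "(\<Sum>x\<in>UNIV. p x * gen R f x)
      = (\<Sum>x\<in>UNIV. \<Sum>y\<in>UNIV. p x * R x y * f y) - (\<Sum>x\<in>UNIV. p x * f x * (\<Sum>y\<in>UNIV. R x y))"
    unfolding gen_def by (simp add: sum_distrib_left sum_subtractf algebra_simps)
  also have "(\<Sum>x\<in>UNIV. \<Sum>y\<in>UNIV. p x * R x y * f y) = (\<Sum>y\<in>UNIV. f y * (\<Sum>x\<in>UNIV. p x * R x y))"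
    by (subst sum.swap) (simp add: sum_distrib_left algebra_simps)
  also have "\<dots> = (\<Sum>x\<in>UNIV. p x * f x * (\<Sum>y\<in>UNIV. R x y))"
    by (simp add: inflow algebra_simps)
  finally show ?thesis by simp
qed

section \<open>Irreducibility: positivity and uniqueness\<close>

text \<open>Minimum principle: a nonnegative balanced vector that vanishes at one state vanishes
  everywhere, since zero inflow at z forces r x = 0 for every x with R x z > 0.\<close>
lemma balanced_nonneg_vanishes:
  assumes nn: "\<And>x y. x \<noteq> y \<Longrightarrow> R x y \<ge> 0" and irr: "irreducible R"
    and r_nonneg: "\<And>x. r x \<ge> 0" and r_bal: "\<And>y. net_flux R r y = 0" and r_zero: "r y = 0"
  shows "r x = 0"
proof -
  have "(x, y) \<in> {(x, y). x \<noteq> y \<and> R x y > 0}\<^sup>*" using irr unfolding irreducible_def by auto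
  then show ?thesis
  proof (induction rule: converse_rtrancl_induct)
    case base
    then show ?case using r_zero by simp
  next
    case (step x z)
    then have xz: "x \<noteq> z" "R x z > 0" by auto
    have "(\<Sum>w\<in>UNIV-{z}. r w * R w z) = 0"
      using r_bal[of z] step.IH unfolding net_flux_def by simp
    moreover have "\<forall>w\<in>UNIV-{z}. r w * R w z \<ge> 0" using r_nonneg nn by auto
    ultimately have "\<forall>w\<in>UNIV-{z}. r w * R w z = 0"
      using sum_nonneg_eq_0_iff[of "UNIV-{z}" "\<lambda>w. r w * R w z"] by simp
    then show ?case using xz by auto
  qed
qed

lemma stationary_pos:
  assumes nn: "\<And>x y. x \<noteq> y \<Longrightarrow> R x y \<ge> 0" and irr: "irreducible R"
    and st: "stationary_dist R p"
  shows "p x > 0"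
proof (rule ccontr)
  have p_nonneg: "\<And>x. p x \<ge> 0" and p_bal: "\<And>y. net_flux R p y = 0"
    using st unfolding stationary_dist_iff by auto
  assume "\<not> p x > 0"
  then have "p x = 0" using p_nonneg[of x] by linarith
  then have "\<And>w. p w = 0" using balanced_nonneg_vanishes[OF nn irr p_nonneg p_bal] by blast
  then show False using st unfolding stationary_dist_def by simp
qed

text \<open>The balanced vectors form the line spanned by the stationary law: subtract the
  largest multiple t * rho below v and apply the minimum principle.\<close>
lemma balanced_multiple_of_stationary:
  assumes nn: "\<And>x y. x \<noteq> y \<Longrightarrow> R x y \<ge> 0" and irr: "irreducible R"
    and st: "stationary_dist R \<rho>" and v_bal: "\<And>y. net_flux R v y = 0"
  shows "v x = (\<Sum>w\<in>UNIV. v w) * \<rho> x"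
proof -
  have pos: "\<And>x. \<rho> x > 0" using stationary_pos[OF nn irr st] .
  define t where "t = Min (range (\<lambda>x. v x / \<rho> x))"
  have "t \<in> range (\<lambda>x. v x / \<rho> x)" unfolding t_def by (rule Min_in) auto
  then obtain x0 where x0: "t = v x0 / \<rho> x0" by auto
  have t_le: "t \<le> v x / \<rho> x" for x unfolding t_def by simp
  define r where "r x = v x - t * \<rho> x" for x
  have r_nonneg: "r x \<ge> 0" for x
    using t_le[of x] pos[of x] unfolding r_def by (simp add: field_simps)
  have r_bal: "net_flux R r y = 0" for y
    using v_bal st unfolding r_def[abs_def] net_flux_diff net_flux_scale stationary_dist_iff by simp
  have "r x0 = 0" using x0 pos[of x0] unfolding r_def by simp
  then have "r x = 0" for x using balanced_nonneg_vanishes[OF nn irr r_nonneg r_bal] by blast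
  then have v_eq: "v x = t * \<rho> x" for x unfolding r_def by simp
  have "(\<Sum>w\<in>UNIV. v w) = t"
    using st unfolding stationary_dist_def by (simp add: v_eq sum_distrib_left[symmetric])
  then show ?thesis using v_eq by simp
qed

lemma stationary_unique:
  assumes nn: "\<And>x y. x \<noteq> y \<Longrightarrow> R x y \<ge> 0" and irr: "irreducible R"
    and p: "stationary_dist R p" and q: "stationary_dist R q"
  shows "p = q"
proof
  fix x
  have "p x = (\<Sum>w\<in>UNIV. p w) * q x"
    using balanced_multiple_of_stationary[OF nn irr q] p unfolding stationary_dist_iff by blast
  then show "p x = q x" using p unfolding stationary_dist_def by simp
qed

section \<open>Existence of a stationary law\<close>

lemma nontrivial_kernel_from_transpose:
  fixes A :: "real^'n^'n"
  assumes u: "transpose A *v u = 0" "u \<noteq> 0"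
  shows "\<exists>v. v \<noteq> 0 \<and> A *v v = 0"
proof (rule ccontr)
  assume "\<not> ?thesis"
  then have "\<exists>B. B ** A = mat 1" using matrix_left_invertible_ker by blast
  then have "invertible (transpose A)" using invertible_left_inverse transpose_invertible by blast
  then have "\<exists>B. B ** transpose A = mat 1" using invertible_left_inverse by blast
  then show False using u matrix_left_invertible_ker by blast
qed

definition flux_matrix :: "('k::finite \<Rightarrow> 'k \<Rightarrow> real) \<Rightarrow> real^'k^'k" where
  "flux_matrix R = (\<chi> y x. if x = y then - (\<Sum>z\<in>UNIV-{y}. R y z) else R x y)"

lemma sum_if_eq:
  fixes y :: "'k::finite"
  shows "(\<Sum>x\<in>UNIV. if x = y then A else B x) = A + (\<Sum>x\<in>UNIV-{y}. B x)"
  by (subst sum.remove[of UNIV y]) auto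

lemma flux_matrix_mult: "(flux_matrix R *v v) $ y = net_flux R (\<lambda>x. v$x) y"
proof -
  have "(flux_matrix R *v v) $ y
      = (\<Sum>x\<in>UNIV. if x = y then - (\<Sum>z\<in>UNIV-{y}. R y z) * v$y else R x y * v$x)"
    unfolding flux_matrix_def matrix_vector_mult_def by (auto intro!: sum.cong)
  also have "\<dots> = net_flux R (\<lambda>x. v$x) y"
    unfolding sum_if_eq net_flux_def by (simp add: algebra_simps)
  finally show ?thesis .
qed

lemma flux_matrix_columns: "transpose (flux_matrix R) *v vec 1 = 0"
proof -
  have "(transpose (flux_matrix R) *v vec 1) $ x = 0" for x
  proof -
    have "(transpose (flux_matrix R) *v vec 1) $ x
        = (\<Sum>y\<in>UNIV. if y = x then - (\<Sum>z\<in>UNIV-{x}. R x z) else R x y)"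
      unfolding flux_matrix_def matrix_vector_mult_def transpose_def by (auto intro!: sum.cong)
    then show ?thesis unfolding sum_if_eq by simp
  qed
  then show ?thesis by (simp add: vec_eq_iff)
qed

text \<open>The modulus of a balanced vector is balanced: its net flux is nonnegative at every
  state by the triangle inequality, and the fluxes sum to zero.\<close>
lemma abs_balanced:
  assumes nn: "\<And>x y. x \<noteq> y \<Longrightarrow> R x y \<ge> 0" and v_bal: "\<And>y. net_flux R v y = 0"
  shows "net_flux R (\<lambda>x. \<bar>v x\<bar>) y = 0"
proof -
  have flux_nonneg: "net_flux R (\<lambda>x. \<bar>v x\<bar>) y \<ge> 0" for y
  proof -
    have "(\<Sum>z\<in>UNIV-{y}. R y z) \<ge> 0" by (rule sum_nonneg) (auto intro: nn)
    then have "\<bar>v y\<bar> * (\<Sum>z\<in>UNIV-{y}. R y z) = \<bar>\<Sum>x\<in>UNIV-{y}. v x * R x y\<bar>"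
      using v_bal[of y] unfolding net_flux_def by (simp add: abs_mult)
    also have "\<dots> \<le> (\<Sum>x\<in>UNIV-{y}. \<bar>v x * R x y\<bar>)" by (rule sum_abs)
    also have "\<dots> = (\<Sum>x\<in>UNIV-{y}. \<bar>v x\<bar> * R x y)"
      by (intro sum.cong) (auto simp: abs_mult nn)
    finally show ?thesis unfolding net_flux_def by simp
  qed
  then show ?thesis
    using sum_nonneg_eq_0_iff[of UNIV "net_flux R (\<lambda>x. \<bar>v x\<bar>)"] net_flux_total by auto
qed

text \<open>Existence: normalize the modulus of a nonzero kernel vector of the flux matrix.\<close>
lemma stationary_exists:
  fixes R :: "'k::finite \<Rightarrow> 'k \<Rightarrow> real"
  assumes nn: "\<And>x y. x \<noteq> y \<Longrightarrow> R x y \<ge> 0"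
  shows "\<exists>p. stationary_dist R p"
proof -
  have "vec 1 \<noteq> (0 :: real^'k)" by (simp add: vec_eq_iff)
  then obtain v where v: "v \<noteq> 0" "flux_matrix R *v v = 0"
    using nontrivial_kernel_from_transpose[OF flux_matrix_columns[of R]] by blast
  define w where "w x = \<bar>v$x\<bar>" for x
  have w_bal: "net_flux R w y = 0" for y
    unfolding w_def using abs_balanced[where v="\<lambda>x. v$x", OF nn] v(2) flux_matrix_mult[of R v] by simp
  obtain x0 where "v$x0 \<noteq> 0" using v(1) by (auto simp: vec_eq_iff)
  then have mass_pos: "(\<Sum>x\<in>UNIV. w x) > 0" unfolding w_def
    by (metis (no_types, lifting) abs_ge_zero finite UNIV_I sum_pos2 zero_less_abs_iff)
  define p where "p x = (1 / (\<Sum>x\<in>UNIV. w x)) * w x" for x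
  have "net_flux R p y = 0" for y unfolding p_def[abs_def] net_flux_scale w_bal by simp
  moreover have "p x \<ge> 0" for x using mass_pos unfolding p_def w_def by simp
  moreover have "(\<Sum>x\<in>UNIV. p x) = 1"
    using mass_pos unfolding p_def by (simp add: sum_divide_distrib[symmetric])
  ultimately show ?thesis unfolding stationary_dist_iff by blast
qed

lemma stationary_ex1:
  assumes nn: "\<And>x y. x \<noteq> y \<Longrightarrow> R x y \<ge> 0" and irr: "irreducible R"
  shows "\<exists>!p. stationary_dist R p"
  using stationary_exists[of R, OF nn] stationary_unique[of R, OF nn irr] by blast

section \<open>Continuity of the stationary law in the rates\<close>

text \<open>Replacing one (redundant) row of the flux matrix by the total-mass functional gives
  a matrix that is injective under irreducibility, hence has a left inverse.\<close>
definition augmented_flux_matrix :: "('k::finite \<Rightarrow> 'k \<Rightarrow> real) \<Rightarrow> 'k \<Rightarrow> real^'k^'k" where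
  "augmented_flux_matrix R j0 = (\<chi> j x. if j = j0 then 1 else flux_matrix R $ j $ x)"

lemma augmented_flux_matrix_mult:
  "(augmented_flux_matrix R j0 *v v) $ j = (if j = j0 then (\<Sum>x\<in>UNIV. v$x) else net_flux R (\<lambda>x. v$x) j)"
  using flux_matrix_mult[of R v j] unfolding augmented_flux_matrix_def
  by (simp add: matrix_vector_mult_def)

lemma augmented_flux_matrix_left_inverse:
  assumes nn: "\<And>x y. x \<noteq> y \<Longrightarrow> R x y \<ge> 0" and irr: "irreducible R"
    and st: "stationary_dist R \<rho>"
  shows "\<exists>B. B ** augmented_flux_matrix R j0 = mat 1"
proof -
  have "v = 0" if v: "augmented_flux_matrix R j0 *v v = 0" for v
  proof -
    let ?F = "net_flux R (\<lambda>x. v$x)"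
    have other: "?F j = 0" if "j \<noteq> j0" for j
      using arg_cong[OF v, of "\<lambda>u. u$j"] that by (simp add: augmented_flux_matrix_mult)
    have mass: "(\<Sum>x\<in>UNIV. v$x) = 0"
      using arg_cong[OF v, of "\<lambda>u. u$j0"] by (simp add: augmented_flux_matrix_mult)
    have "(\<Sum>j\<in>UNIV. ?F j) = ?F j0 + (\<Sum>j\<in>UNIV-{j0}. ?F j)"
      by (subst sum.remove[of UNIV j0]) auto
    also have "(\<Sum>j\<in>UNIV-{j0}. ?F j) = 0" using other by (intro sum.neutral) auto
    finally have "?F j0 = 0" using net_flux_total[of R "\<lambda>x. v$x"] by simp
    then have "?F j = 0" for j using other by (cases "j = j0") auto
    then have "v$x = 0" for x
      using balanced_multiple_of_stationary[OF nn irr st, of "\<lambda>x. v$x" x] mass by simp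
    then show ?thesis by (simp add: vec_eq_iff)
  qed
  then show ?thesis using matrix_left_invertible_ker by blast
qed

lemma tendsto_bounded_mult_zero:
  assumes a: "\<And>h. \<bar>a h\<bar> \<le> 1" and b: "(b \<longlongrightarrow> (0::real)) F"
  shows "((\<lambda>h. a h * b h) \<longlongrightarrow> 0) F"
proof (rule Lim_null_comparison[where g="\<lambda>h. \<bar>b h\<bar>"])
  show "\<forall>\<^sub>F h in F. norm (a h * b h) \<le> \<bar>b h\<bar>"
    using a by (auto simp: abs_mult intro!: mult_left_le_one_le always_eventually)
  show "((\<lambda>h. \<bar>b h\<bar>) \<longlongrightarrow> 0) F" using tendsto_rabs_zero[OF b] .
qed

text \<open>Stationary laws are uniformly bounded, which makes the flux estimates uniform.\<close>
lemma stationary_le1: "stationary_dist R p \<Longrightarrow> \<bar>p x\<bar> \<le> 1"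
  unfolding stationary_dist_def by (metis abs_of_nonneg finite UNIV_I member_le_sum)

lemma net_flux_tendsto_zero:
  assumes p: "\<And>h. stationary_dist (S h) (p h)" and D: "\<And>x y. ((\<lambda>h. D h x y) \<longlongrightarrow> 0) F"
  shows "((\<lambda>h. net_flux (D h) (p h) j) \<longlongrightarrow> 0) F"
proof -
  have "((\<lambda>h. \<Sum>x\<in>UNIV-{j}. p h x * D h x j) \<longlongrightarrow> 0) F"
    by (intro tendsto_null_sum tendsto_bounded_mult_zero stationary_le1[OF p] D)
  moreover have "((\<lambda>h. p h j * (\<Sum>z\<in>UNIV-{j}. D h j z)) \<longlongrightarrow> 0) F"
    by (intro tendsto_bounded_mult_zero stationary_le1[OF p] tendsto_null_sum D)
  ultimately show ?thesis unfolding net_flux_def using tendsto_diff by fastforce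
qed

text \<open>Continuity: with d h = p h - rho, the augmented matrix maps d h to a vector whose
  entries are net fluxes of p h under the rate differences R - S h; these tend to zero,
  and d h is recovered by the left inverse.\<close>
lemma stationary_continuous:
  fixes R :: "'k::finite \<Rightarrow> 'k \<Rightarrow> real"
  assumes nn: "\<And>x y. x \<noteq> y \<Longrightarrow> R x y \<ge> 0" and irr: "irreducible R"
    and st: "stationary_dist R \<rho>"
    and S_lim: "\<And>x y. ((\<lambda>h. S h x y) \<longlongrightarrow> R x y) F"
    and p: "\<And>h. stationary_dist (S h) (p h)"
  shows "((\<lambda>h. p h i) \<longlongrightarrow> \<rho> i) F"
proof -
  fix j0 :: 'k
  let ?A = "augmented_flux_matrix R j0"
  obtain B where B: "B ** ?A = mat 1"
    using augmented_flux_matrix_left_inverse[OF nn irr st] by blast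
  define d where "d h = (\<chi> x. p h x - \<rho> x)" for h
  have Ad: "(?A *v d h) $ j = (if j = j0 then 0 else net_flux (\<lambda>x y. R x y - S h x y) (p h) j)"
    for h j
  proof -
    have "net_flux R (\<lambda>x. d h $ x) j = net_flux R (p h) j - net_flux R \<rho> j"
      unfolding d_def by (simp add: net_flux_diff)
    also have "\<dots> = net_flux R (p h) j - net_flux (S h) (p h) j"
      using st p[of h] unfolding stationary_dist_iff by simp
    finally have "net_flux R (\<lambda>x. d h $ x) j = net_flux (\<lambda>x y. R x y - S h x y) (p h) j"
      unfolding net_flux_rates_diff .
    moreover have "(\<Sum>x\<in>UNIV. d h $ x) = 0"
      using st p[of h] unfolding d_def stationary_dist_iff by (simp add: sum_subtractf)
    ultimately show ?thesis unfolding augmented_flux_matrix_mult by simp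
  qed
  have Ad_lim: "((\<lambda>h. (?A *v d h) $ j) \<longlongrightarrow> 0) F" for j
  proof -
    have rates_lim: "((\<lambda>h. R x y - S h x y) \<longlongrightarrow> 0) F" for x y
      using tendsto_diff[OF tendsto_const[of "R x y"] S_lim[of x y]] by simp
    show ?thesis
      using net_flux_tendsto_zero[where p=p and S=S and D="\<lambda>h x y. R x y - S h x y", OF p rates_lim]
      unfolding Ad by (cases "j = j0") simp_all
  qed
  have "d h $ i = (\<Sum>j\<in>UNIV. B $ i $ j * (?A *v d h) $ j)" for h
    by (subst matrix_vector_mul_assoc[of B ?A, unfolded B matrix_vector_mul_lid, symmetric])
       (simp add: matrix_vector_mult_def)
  moreover have "((\<lambda>h. \<Sum>j\<in>UNIV. B $ i $ j * (?A *v d h) $ j) \<longlongrightarrow> 0) F"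
    by (intro tendsto_null_sum tendsto_mult_right_zero Ad_lim)
  ultimately have "((\<lambda>h. d h $ i) \<longlongrightarrow> 0) F" by simp
  then show ?thesis unfolding d_def by (simp add: LIM_zero_iff)
qed

section \<open>The response formula\<close>

lemma exp_difference_quotient: "((\<lambda>h. (1 - exp (h * c)) / h) \<longlongrightarrow> - (c::real)) (at 0)"
proof -
  have "((\<lambda>h. exp (h * c)) has_real_derivative exp (0 * c) * c) (at 0)"
    by (auto intro!: derivative_eq_intros)
  then have "((\<lambda>h. (exp (h * c) - exp (0 * c)) / (h - 0)) \<longlongrightarrow> c) (at 0)"
    unfolding has_field_derivative_iff by simp
  then have "((\<lambda>h. - ((exp (h * c) - 1) / h)) \<longlongrightarrow> - c) (at 0)"
    by (intro tendsto_minus) simp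
  then show ?thesis by (simp add: minus_divide_left)
qed

lemma irreducible_rescaled:
  assumes irr: "irreducible R" and pos: "\<And>x y. f x y > 0"
  shows "irreducible (\<lambda>x y. R x y * f x y)"
proof -
  have "R x y * f x y > 0 \<longleftrightarrow> R x y > 0" for x y
    using pos[of x y] by (simp add: zero_less_mult_iff)
  then show ?thesis using irr unfolding irreducible_def by simp
qed

lemma tilted_average_gen:
  assumes st: "stationary_dist (\<lambda>x y. W x y * exp (h * c x y)) p"
  shows "(\<Sum>x\<in>UNIV. p x * gen W M x)
       = (\<Sum>x\<in>UNIV. p x * (\<Sum>y\<in>UNIV. W x y * (1 - exp (h * c x y)) * (M y - M x)))"
proof -
  let ?Rh = "\<lambda>x y. W x y * exp (h * c x y)"
  have split: "gen W M x = gen ?Rh M x + (\<Sum>y\<in>UNIV. W x y * (1 - exp (h * c x y)) * (M y - M x))" for x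
    unfolding gen_def by (simp add: sum.distrib[symmetric] algebra_simps)
  have "(\<Sum>x\<in>UNIV. p x * gen ?Rh M x) = 0"
    using st by (intro balanced_gen_average) (simp add: stationary_dist_iff)
  then show ?thesis unfolding split by (simp add: distrib_left sum.distrib)
qed

lemma linear_response:
  fixes W :: "'k::finite \<Rightarrow> 'k \<Rightarrow> real" and c :: "'k \<Rightarrow> 'k \<Rightarrow> real"
  assumes nn: "\<And>x y. x \<noteq> y \<Longrightarrow> W x y \<ge> 0" and irr: "irreducible W"
    and st: "stationary_dist W \<rho>"
  shows "((\<lambda>h. \<Sum>x\<in>UNIV. (THE p. stationary_dist (\<lambda>x y. W x y * exp (h * c x y)) p) x * gen W M x)
     has_real_derivative (\<Sum>x\<in>UNIV. \<rho> x * (\<Sum>y\<in>UNIV. W x y * (- c x y) * (M y - M x)))) (at 0)"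
proof -
  define P where "P h = (THE p. stationary_dist (\<lambda>x y. W x y * exp (h * c x y)) p)" for h
  define G where "G h = (\<Sum>x\<in>UNIV. P h x * (\<Sum>y\<in>UNIV. W x y * (1 - exp (h * c x y)) * (M y - M x)))"
    for h
  have P_stat: "stationary_dist (\<lambda>x y. W x y * exp (h * c x y)) (P h)" for h
  proof -
    have irr_h: "irreducible (\<lambda>x y. W x y * exp (h * c x y))"
      using irreducible_rescaled[OF irr, of "\<lambda>x y. exp (h * c x y)"] by simp
    have nn_h: "W x y * exp (h * c x y) \<ge> 0" if "x \<noteq> y" for x y
      using nn[OF that] by simp
    show ?thesis unfolding P_def by (rule theI'[OF stationary_ex1[OF nn_h irr_h]])
  qed
  have P_lim: "((\<lambda>h. P h x) \<longlongrightarrow> \<rho> x) (at 0)" for x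
  proof (rule stationary_continuous[OF nn irr st _ P_stat])
    fix x y
    have "((\<lambda>h. W x y * exp (h * c x y)) \<longlongrightarrow> W x y * exp (0 * c x y)) (at 0)"
      by (intro tendsto_intros)
    then show "((\<lambda>h. W x y * exp (h * c x y)) \<longlongrightarrow> W x y) (at 0)" by simp
  qed
  have "(G h - G 0) / (h - 0)
      = (\<Sum>x\<in>UNIV. P h x * (\<Sum>y\<in>UNIV. W x y * ((1 - exp (h * c x y)) / h) * (M y - M x)))" for h
    unfolding G_def by (simp add: sum_divide_distrib sum_distrib_left)
  moreover have "((\<lambda>h. \<Sum>x\<in>UNIV. P h x * (\<Sum>y\<in>UNIV. W x y * ((1 - exp (h * c x y)) / h) * (M y - M x)))
      \<longlongrightarrow> (\<Sum>x\<in>UNIV. \<rho> x * (\<Sum>y\<in>UNIV. W x y * (- c x y) * (M y - M x)))) (at 0)"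
    by (intro tendsto_intros P_lim exp_difference_quotient)
  ultimately have "(G has_real_derivative (\<Sum>x\<in>UNIV. \<rho> x * (\<Sum>y\<in>UNIV. W x y * (- c x y) * (M y - M x)))) (at 0)"
    unfolding has_field_derivative_iff by simp
  moreover have "(\<lambda>h. \<Sum>x\<in>UNIV. P h x * gen W M x) = G"
    unfolding G_def using tilted_average_gen[OF P_stat] by (intro ext) simp
  ultimately show ?thesis unfolding P_def by simp
qed

text \<open>Evaluation of the response for the tilt b * V y - a * V x: expand the product and
  use that the rho-average of L (V * M) vanishes.\<close>
lemma response_value:
  assumes st: "stationary_dist W \<rho>"
  shows "(\<Sum>x\<in>UNIV. \<rho> x * (\<Sum>y\<in>UNIV. W x y * (- (b * V y - a * V x)) * (M y - M x)))
     = b * (\<Sum>x\<in>UNIV. \<rho> x * (M x * gen W V x)) + a * (\<Sum>x\<in>UNIV. \<rho> x * (V x * gen W M x))"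
proof -
  have product_average: "(\<Sum>x\<in>UNIV. \<rho> x * gen W (\<lambda>x. V x * M x) x) = 0"
    using st by (intro balanced_gen_average) (simp add: stationary_dist_iff)
  have pointwise: "\<rho> x * (\<Sum>y\<in>UNIV. W x y * (- (b * V y - a * V x)) * (M y - M x))
     = - b * (\<rho> x * gen W (\<lambda>x. V x * M x) x) + b * (\<rho> x * (M x * gen W V x))
       + a * (\<rho> x * (V x * gen W M x))" for x
  proof -
    have "- b * (\<rho> x * gen W (\<lambda>x. V x * M x) x) + b * (\<rho> x * (M x * gen W V x))
          + a * (\<rho> x * (V x * gen W M x))
      = (\<Sum>y\<in>UNIV. - b * (\<rho> x * (W x y * (V y * M y - V x * M x)))
          + b * (\<rho> x * (M x * (W x y * (V y - V x)))) + a * (\<rho> x * (V x * (W x y * (M y - M x)))))"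
      unfolding gen_def by (simp add: sum.distrib sum_distrib_left sum_negf sum_subtractf)
    also have "\<dots> = \<rho> x * (\<Sum>y\<in>UNIV. W x y * (- (b * V y - a * V x)) * (M y - M x))"
      unfolding sum_distrib_left by (intro sum.cong) (auto simp: algebra_simps)
    finally show ?thesis by simp
  qed
  show ?thesis
    unfolding pointwise by (simp add: sum.distrib sum_subtractf sum_distrib_left[symmetric] product_average)
qed

theorem proposition2:
  fixes W :: "'k::finite \<Rightarrow> 'k \<Rightarrow> real"
    and \<rho> V M :: "'k \<Rightarrow> real" and a b :: real
  assumes nonneg: "\<And>x y. x \<noteq> y \<Longrightarrow> W x y \<ge> 0"
    and irr: "irreducible W"
    and stat: "stationary_dist W \<rho>"
  shows "((\<lambda>h. \<Sum>x\<in>UNIV. (THE p. stationary_dist (\<lambda>x y. W x y * exp (h * (b * V y - a * V x))) p) x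
                      * gen W M x)
           has_real_derivative (b * (\<Sum>x\<in>UNIV. \<rho> x * (M x * gen W V x)) + a * (\<Sum>x\<in>UNIV. \<rho> x * (V x * gen W M x))))
          (at 0)
      \<and> ((\<lambda>h. \<Sum>x\<in>UNIV. (THE p. stationary_dist (\<lambda>x y. W x y * exp (h * (a * M y - b * M x))) p) x
                      * gen W V x)
           has_real_derivative (b * (\<Sum>x\<in>UNIV. \<rho> x * (M x * gen W V x)) + a * (\<Sum>x\<in>UNIV. \<rho> x * (V x * gen W M x))))
          (at 0)"
proof -
  note chi_MV = linear_response[where W=W and c="\<lambda>x y. b * V y - a * V x" and M=M, OF nonneg irr stat,
      unfolded response_value[OF stat, of b V a M]]
  note chi_VM = linear_response[where W=W and c="\<lambda>x y. a * M y - b * M x" and M=V, OF nonneg irr stat,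
      unfolded response_value[OF stat, of a M b V]]
  show ?thesis using chi_MV chi_VM by (simp add: add.commute)
qed

end
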